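(* Let $\Omega$ be an alphabet with $b\geq 2$ symbols and let $x\in\Omega^{\mathbb{N}}$. Fix a positive real number $\lambda$ and define, for every $i\in\mathbb{N}_0$, $p_i=\liminf_{k\to\infty}Z^\lambda_{i,k}(x)$. If $\sum_{i\geq 0} i\,p_i=\lambda$, then $x$ is Borel normal to base $b$.
   Context: Positions in sequences are numbered from $1$; $x[i\dots j]$ is the subword from position $i$ to $j$. For words $v,w$, $|v|_w=\#\{1\leq i\leq |v|-|w|+1 : v[i\dots i+|w|-1]=w\}$. For $x\in\Omega^{\mathbb{N}}$, $\lambda>0$, $i\in\mathbb{N}_0$, $k\in\mathbb{N}$, $Z^\lambda_{i,k}(x)=b^{-k}\,\#\{w\in\Omega^k : |x[1\dots\lfloor\lambda b^k\rfloor+k-1]|_w=i\}$. A sequence $x\in\Omega^{\mathbb{N}}$ is Borel normal (to base $b$) if for every finite word $w$ over $\Omega$, $\lim_{n\to\infty}|x[1\dots n]|_w/n=b^{-|w|}$. *)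

theory Defs
  imports "HOL-Analysis.Analysis"
begin

text \<open>Sequences x over the alphabet 'a are functions nat => 'a; the paper's position j
  (numbered from 1) corresponds to x (j - 1). The prefix x[1..n] is the list of the first n symbols.\<close>
definition pref :: "(nat \<Rightarrow> 'a) \<Rightarrow> nat \<Rightarrow> 'a list" where
  "pref x n = map x [0..<n]"

definition occ :: "'a list \<Rightarrow> 'a list \<Rightarrow> nat" where
  "occ v w = card {i. i + length w \<le> length v \<and> take (length w) (drop i v) = w}"

definition Zfreq :: "real \<Rightarrow> nat \<Rightarrow> nat \<Rightarrow> (nat \<Rightarrow> 'a::finite) \<Rightarrow> real" where
  "Zfreq lam i k x =
     real (card {w :: 'a list. length w = k \<and>
        occ (pref x (nat \<lfloor>lam * real CARD('a) ^ k\<rfloor> + k - 1)) w = i})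
     / real CARD('a) ^ k"

definition borel_normal :: "(nat \<Rightarrow> 'a::finite) \<Rightarrow> bool" where
  "borel_normal x \<longleftrightarrow> (\<forall>w :: 'a list.
     (\<lambda>n. real (occ (pref x n) w) / real n) \<longlonglongrightarrow> (1 / real CARD('a)) ^ length w)"

end

theory Submission
  imports Defs "HOL-Real_Asymp.Real_Asymp"
begin

text \<open>Fix a word \<open>u\<close> of length \<open>l\<close> and write \<open>b = CARD('a)\<close>. Among all \<open>b^k\<close> words of length
  \<open>k\<close>, the number of occurrences of \<open>u\<close> has mean about \<open>k b^-l\<close> and variance \<open>O(l k b^k)\<close>, since only
  overlapping positions are correlated; by Chebyshev's inequality only \<open>o(b^k)\<close> words of length \<open>k\<close>
  contain \<open>u\<close> noticeably more often. The hypothesis \<open>\<Sum>i. i p\<^sub>i = lam\<close> says that almost all of the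
  first \<open>lam b^k\<close> windows of length \<open>k\<close> of \<open>x\<close> carry a word that occurs there fewer than \<open>I\<close> times,
  for some fixed \<open>I\<close>; hence few of these windows carry one of the exceptional words. Counting the
  occurrences of \<open>u\<close> in \<open>x[1..n]\<close> through the windows of length \<open>k\<close>, for \<open>lam b^(k-1) < n \<le> lam b^k\<close>,
  gives \<open>|x[1..n]|\<^sub>u \<le> (b^-l + \<eta>) n\<close> eventually. The matching lower bound follows because the
  counts of all words of length \<open>l\<close> add up to \<open>n - l + 1\<close>.\<close>

lemma sum_lessThan_shift_ge:
  fixes f :: "nat \<Rightarrow> real"
  assumes "\<And>j. 0 \<le> f j" "\<And>j. f j \<le> 1"
  shows "(\<Sum>j<n. f j) - real t \<le> (\<Sum>j<n. f (j + t))"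
proof (induction t)
  case 0
  then show ?case
    by simp
next
  case (Suc t)
  have "(\<Sum>j<n. f (j + t)) \<le> f t + (\<Sum>j<n. f (Suc j + t))"
    using sum.lessThan_Suc_shift[of "\<lambda>j. f (j + t)" n] assms(1)[of "n + t"] by simp
  then show ?case
    using Suc assms(2)[of t] by simp
qed

lemma card_near_le: "card {s \<in> S. t < s + l \<and> s < t + (l::nat)} \<le> 2 * l"
proof -
  have "card {s \<in> S. t < s + l \<and> s < t + l} \<le> card {t + 1 - l..<t + l}"
    by (intro card_mono) auto
  then show ?thesis
    by simp
qed

lemma sum_subset_le_threshold:
  fixes f :: "'b \<Rightarrow> nat"
  assumes "finite W" "S \<subseteq> W"
  shows "(\<Sum>w\<in>S. real (f w))
    \<le> real I * real (card S) + (\<Sum>w\<in>W. real (f w)) - (\<Sum>i<I. real i * real (card {w \<in> W. f w = i}))"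
proof -
  let ?small = "{w \<in> W. f w < I}"
  have "(\<Sum>i<I. real i * real (card {w \<in> W. f w = i})) = (\<Sum>i<I. \<Sum>w \<in> {w \<in> ?small. f w = i}. real (f w))"
    by (intro sum.cong refl) (auto intro!: arg_cong[where f = card])
  also have "\<dots> = (\<Sum>w\<in>?small. real (f w))"
    using assms(1) by (intro sum.group) auto
  finally have small: "(\<Sum>i<I. real i * real (card {w \<in> W. f w = i})) = (\<Sum>w\<in>?small. real (f w))" .
  have "(\<Sum>w\<in>S. real (f w)) \<le> (\<Sum>w\<in>S. real I + (if f w < I then 0 else real (f w)))"
    by (intro sum_mono) auto
  also have "\<dots> \<le> real I * real (card S) + (\<Sum>w\<in>W. if f w < I then 0 else real (f w))"
    using assms by (simp add: sum.distrib sum_mono2)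
  also have "(\<Sum>w\<in>W. if f w < I then 0 else real (f w)) = (\<Sum>w\<in>W - ?small. real (f w))"
    using assms(1) by (intro sum.mono_neutral_cong_right) auto
  also have "\<dots> = (\<Sum>w\<in>W. real (f w)) - (\<Sum>w\<in>?small. real (f w))"
    using assms(1) by (intro sum_diff) auto
  finally show ?thesis
    using small by simp
qed

lemma finite_lists_length_eq_UNIV [simp]: "finite {w :: 'a::finite list. length w = k}"
  using finite_lists_length_eq[of "UNIV :: 'a set" k] by simp

lemma card_lists_length_eq_UNIV: "card {w :: 'a::finite list. length w = k} = CARD('a) ^ k"
  using card_lists_length_eq[of "UNIV :: 'a set" k] by simp

lemma sum_of_bool_lists_length_eq:
  "(\<Sum>w | length w = k. of_bool (P w) :: real) = real (card {w :: 'a::finite list. length w = k \<and> P w})"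
  by (simp add: Collect_conj_eq)

lemma card_lists_fixed_nths:
  fixes g :: "nat \<Rightarrow> 'a::finite"
  assumes "D \<subseteq> {..<k}"
  shows "card {w :: 'a list. length w = k \<and> (\<forall>d\<in>D. w ! d = g d)} = CARD('a) ^ (k - card D)"
proof -
  let ?B = "\<lambda>d. if d \<in> D then {g d} else UNIV"
  have "bij_betw (\<lambda>f. map f [0..<k]) (Pi\<^sub>E {..<k} ?B) {w. length w = k \<and> (\<forall>d\<in>D. w ! d = g d)}"
    by (rule bij_betw_byWitness[where f' = "\<lambda>w. restrict ((!) w) {..<k}"])
       (use assms in \<open>auto simp: PiE_def extensional_def Pi_def split: if_splits intro!: nth_equalityI\<close>)
  then have "card {w :: 'a list. length w = k \<and> (\<forall>d\<in>D. w ! d = g d)} = (\<Prod>d<k. card (?B d))"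
    using bij_betw_same_card card_PiE[of "{..<k}" ?B] by fastforce
  also have "\<dots> = CARD('a) ^ card ({..<k} - D)"
    by (simp add: if_distrib prod.If_cases Diff_eq)
  also have "card ({..<k} - D) = k - card D"
    using assms by (simp add: card_Diff_subset finite_subset)
  finally show ?thesis .
qed

lemma take_drop_eq_iff_nths:
  assumes "i + length u \<le> length w"
  shows "take (length u) (drop i w) = u \<longleftrightarrow> (\<forall>d\<in>{i..<i + length u}. w ! d = u ! (d - i))"
proof
  assume factor: "take (length u) (drop i w) = u"
  show "\<forall>d\<in>{i..<i + length u}. w ! d = u ! (d - i)"
  proof
    fix d assume "d \<in> {i..<i + length u}"
    then have "take (length u) (drop i w) ! (d - i) = w ! d"
      using assms by auto
    then show "w ! d = u ! (d - i)"
      using factor by simp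
  qed
next
  assume "\<forall>d\<in>{i..<i + length u}. w ! d = u ! (d - i)"
  then show "take (length u) (drop i w) = u"
    using assms by (intro nth_equalityI) auto
qed

lemma card_lists_factor_at:
  assumes "i + length u \<le> k"
  shows "card {w :: 'a::finite list. length w = k \<and> take (length u) (drop i w) = u}
    = CARD('a) ^ (k - length u)"
proof -
  have "{w :: 'a list. length w = k \<and> take (length u) (drop i w) = u}
      = {w. length w = k \<and> (\<forall>d\<in>{i..<i + length u}. w ! d = u ! (d - i))}"
    using take_drop_eq_iff_nths assms by auto
  also have "card \<dots> = CARD('a) ^ (k - card {i..<i + length u})"
    using assms by (intro card_lists_fixed_nths) auto
  finally show ?thesis by simp
qed

lemma card_lists_disjoint_factors_at:
  assumes "i + length u \<le> j" "j + length u \<le> k"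
  shows "card {w :: 'a::finite list. length w = k \<and>
      take (length u) (drop i w) = u \<and> take (length u) (drop j w) = u} = CARD('a) ^ (k - 2 * length u)"
proof -
  let ?D = "{i..<i + length u} \<union> {j..<j + length u}"
  define g where "g d = (if d < j then u ! (d - i) else u ! (d - j))" for d
  have "{w :: 'a list. length w = k \<and>
      take (length u) (drop i w) = u \<and> take (length u) (drop j w) = u}
      = {w. length w = k \<and> (\<forall>d\<in>?D. w ! d = g d)}"
    using take_drop_eq_iff_nths[of i u] take_drop_eq_iff_nths[of j u] assms by (auto simp: g_def)
  also have "card \<dots> = CARD('a) ^ (k - card ?D)"
    using assms by (intro card_lists_fixed_nths) auto
  also have "card ?D = 2 * length u"
    using assms by (subst card_Un_disjoint) auto
  finally show ?thesis .
qed

lemma real_card_lists_factor_at: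
  assumes "i + length u \<le> k"
  shows "real (card {w :: 'a::finite list. length w = k \<and> take (length u) (drop i w) = u})
    = real CARD('a) ^ k * (1 / real CARD('a)) ^ length u"
  using card_lists_factor_at[OF assms] assms by (simp add: power_diff[where 'a = real] power_one_over)

lemma real_card_lists_disjoint_factors_at:
  assumes "t + length u \<le> s \<or> s + length u \<le> t" "t + length u \<le> k" "s + length u \<le> k"
  shows "real (card {w :: 'a::finite list. length w = k \<and>
      take (length u) (drop t w) = u \<and> take (length u) (drop s w) = u})
    = real CARD('a) ^ k * ((1 / real CARD('a)) ^ length u)\<^sup>2"
proof -
  have "2 * length u \<le> k"
    using assms by auto
  moreover have "card {w :: 'a list. length w = k \<and>
      take (length u) (drop t w) = u \<and> take (length u) (drop s w) = u} = CARD('a) ^ (k - 2 * length u)"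
    using assms card_lists_disjoint_factors_at[of t u s k] card_lists_disjoint_factors_at[of s u t k]
    by (auto simp: conj_commute)
  ultimately show ?thesis
    by (simp add: power_diff[where 'a = real] power_one_over mult.commute flip: power_mult)
qed

section \<open>Occurrences of a factor in a random word\<close>

lemma occ_eq_sum_of_bool:
  "real (occ w u) = (\<Sum>t<length w + 1 - length u. of_bool (take (length u) (drop t w) = u))"
proof -
  have "{i. i + length u \<le> length w \<and> take (length u) (drop i w) = u}
      = {..<length w + 1 - length u} \<inter> {t. take (length u) (drop t w) = u}"
    by auto
  then show ?thesis
    by (simp add: occ_def)
qed

lemma occ_le_length: "occ w u \<le> length w + 1 - length u"
proof -
  have "occ w u \<le> card {..<length w + 1 - length u}"
    unfolding occ_def by (intro card_mono) auto
  then show ?thesis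
    by simp
qed

text \<open>Occurrences of a word at positions whose windows do not overlap are independent, so only
  overlapping pairs of positions contribute to the variance of the number of occurrences.\<close>

lemma sum_lists_factor_at_centered_product_le:
  fixes u :: "'a::finite list"
  assumes "t + length u \<le> k" "s + length u \<le> k"
  defines "c \<equiv> (1 / real CARD('a)) ^ length u"
  shows "(\<Sum>w | length w = k. (of_bool (take (length u) (drop t w) = u) - c)
      * (of_bool (take (length u) (drop s w) = u) - c))
    \<le> (if t < s + length u \<and> s < t + length u then real CARD('a) ^ k * c else 0)"
proof -
  let ?W = "{w :: 'a list. length w = k}"
  let ?at = "\<lambda>i w. take (length u) (drop i w) = u"
  let ?N = "real (card {w. length w = k \<and> ?at t w \<and> ?at s w})"
  have "(\<Sum>w\<in>?W. (of_bool (?at t w) - c) * (of_bool (?at s w) - c))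
      = (\<Sum>w\<in>?W. of_bool (?at t w \<and> ?at s w)) - c * (\<Sum>w\<in>?W. of_bool (?at t w))
        - c * (\<Sum>w\<in>?W. of_bool (?at s w)) + real (card ?W) * c\<^sup>2"
    by (simp only: of_bool_conj sum.distrib sum_subtractf sum_distrib_left[symmetric] sum_constant
        algebra_simps power2_eq_square)
  also have "\<dots> = ?N - real CARD('a) ^ k * c\<^sup>2"
    using assms(1,2) by (simp add: sum_of_bool_lists_length_eq real_card_lists_factor_at
        card_lists_length_eq_UNIV c_def power2_eq_square)
  also have "\<dots> \<le> (if t < s + length u \<and> s < t + length u then real CARD('a) ^ k * c else 0)"
  proof (cases "t < s + length u \<and> s < t + length u")
    case True
    have "?N \<le> real (card {w :: 'a list. length w = k \<and> ?at t w})"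
      by (intro of_nat_mono card_mono) auto
    then have "?N \<le> real CARD('a) ^ k * c"
      using real_card_lists_factor_at[OF assms(1)] by (simp add: c_def)
    moreover have "0 \<le> real CARD('a) ^ k * c\<^sup>2"
      by simp
    ultimately have "?N - real CARD('a) ^ k * c\<^sup>2 \<le> real CARD('a) ^ k * c"
      by linarith
    then show ?thesis
      using True by (simp only: if_P)
  next
    case False
    then show ?thesis
      using real_card_lists_disjoint_factors_at[of t u s k] assms by (auto simp: c_def)
  qed
  finally show ?thesis .
qed

lemma sum_lists_occ_deviation_sq_le:
  fixes u :: "'a::finite list"
  assumes "length u \<le> k"
  defines "c \<equiv> (1 / real CARD('a)) ^ length u" and "M \<equiv> k + 1 - length u"
  shows "(\<Sum>w | length w = k. (real (occ w u) - real M * c)\<^sup>2)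
    \<le> 2 * real (length u) * real M * real CARD('a) ^ k * c"
proof -
  let ?W = "{w :: 'a list. length w = k}"
  let ?X = "\<lambda>t w. of_bool (take (length u) (drop t w) = u) - c"
  let ?near = "\<lambda>t s. t < s + length u \<and> s < t + length u"
  have c0: "c \<ge> 0"
    by (simp add: c_def)
  have dev: "real (occ w u) - real M * c = (\<Sum>t<M. ?X t w)" if "w \<in> ?W" for w
    using that by (simp add: occ_eq_sum_of_bool sum_subtractf M_def)
  have "(\<Sum>w\<in>?W. (real (occ w u) - real M * c)\<^sup>2) = (\<Sum>w\<in>?W. \<Sum>t<M. \<Sum>s<M. ?X t w * ?X s w)"
    using dev by (simp add: power2_eq_square sum_product)
  also have "\<dots> = (\<Sum>t<M. \<Sum>s<M. \<Sum>w\<in>?W. ?X t w * ?X s w)"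
    by (subst sum.swap) (simp add: sum.swap[where A = ?W])
  also have "\<dots> \<le> (\<Sum>t<M. \<Sum>s<M. if ?near t s then real CARD('a) ^ k * c else 0)"
    unfolding c_def using assms(1)
    by (intro sum_mono sum_lists_factor_at_centered_product_le) (auto simp: M_def)
  also have "\<dots> = (\<Sum>t<M. real CARD('a) ^ k * c * real (card {s \<in> {..<M}. ?near t s}))"
    by (simp add: sum.If_cases Int_def mult.commute)
  also have "\<dots> \<le> (\<Sum>t<M. real CARD('a) ^ k * c * (2 * real (length u)))"
    using c0 of_nat_mono[OF card_near_le[of "{..<M}" _ "length u"], where 'a = real]
    by (intro sum_mono mult_left_mono) simp_all
  also have "\<dots> = 2 * real (length u) * real M * real CARD('a) ^ k * c"
    by simp
  finally show ?thesis .
qed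

lemma card_lists_occ_ge_le:
  fixes u :: "'a::finite list"
  assumes "length u \<le> k" "\<eta> > 0"
  defines "c \<equiv> (1 / real CARD('a)) ^ length u" and "M \<equiv> k + 1 - length u"
  shows "real (card {w :: 'a list. length w = k \<and> (c + \<eta>) * real M \<le> real (occ w u)}) * (\<eta> * real M)\<^sup>2
    \<le> 2 * real (length u) * real M * real CARD('a) ^ k"
proof -
  let ?S = "{w :: 'a list. length w = k \<and> (c + \<eta>) * real M \<le> real (occ w u)}"
  have "real (card ?S) * (\<eta> * real M)\<^sup>2 = (\<Sum>w\<in>?S. (\<eta> * real M)\<^sup>2)"
    by simp
  also have "\<dots> \<le> (\<Sum>w\<in>?S. (real (occ w u) - real M * c)\<^sup>2)"
    using assms(2) by (intro sum_mono power_mono) (auto simp: algebra_simps)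
  also have "\<dots> \<le> (\<Sum>w | length w = k. (real (occ w u) - real M * c)\<^sup>2)"
    by (intro sum_mono2) auto
  also have "\<dots> \<le> 2 * real (length u) * real M * real CARD('a) ^ k * c"
    unfolding c_def M_def by (rule sum_lists_occ_deviation_sq_le[OF assms(1)])
  also have "\<dots> \<le> 2 * real (length u) * real M * real CARD('a) ^ k"
    by (intro mult_left_le) (auto simp: c_def power_le_one)
  finally show ?thesis .
qed

section \<open>Windows of a sequence\<close>

definition window :: "(nat \<Rightarrow> 'a) \<Rightarrow> nat \<Rightarrow> nat \<Rightarrow> 'a list" where
  "window x j k = map x [j..<j + k]"

lemma length_window [simp]: "length (window x j k) = k"
  by (simp add: window_def)

lemma take_drop_window: "t + l \<le> k \<Longrightarrow> take l (drop t (window x j k)) = window x (j + t) l"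
  by (simp add: window_def drop_map take_map add.assoc)

lemma take_drop_pref: "j + k \<le> n \<Longrightarrow> take k (drop j (pref x n)) = window x j k"
  by (simp add: window_def pref_def drop_map take_map)

lemma occ_pref_eq_card_windows:
  "occ (pref x n) w = card {j. j < n + 1 - length w \<and> window x j (length w) = w}"
proof -
  have "{i. i + length w \<le> length (pref x n) \<and> take (length w) (drop i (pref x n)) = w}
      = {j. j < n + 1 - length w \<and> window x j (length w) = w}"
    using take_drop_pref[of _ "length w" n x] by (auto simp: pref_def)
  then show ?thesis
    by (simp add: occ_def)
qed

lemma occ_pref_Nil: "occ (pref x n) [] = Suc n"
  by (simp add: occ_pref_eq_card_windows window_def)

lemma sum_occ_pref_lists:
  fixes x :: "nat \<Rightarrow> 'a::finite"
  shows "(\<Sum>w | length w = k. occ (pref x n) w) = n + 1 - k"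
proof -
  have "(\<Sum>w | length w = k. occ (pref x n) w)
      = (\<Sum>w | length w = k. card {j \<in> {..<n + 1 - k}. window x j k = w})"
    by (intro sum.cong) (auto simp: occ_pref_eq_card_windows)
  also have "\<dots> = card {..<n + 1 - k}"
    using sum.group[of "{..<n + 1 - k}" "{w. length w = k}" "\<lambda>j. window x j k" "\<lambda>_. 1 :: nat"]
    by (simp add: image_subset_iff)
  finally show ?thesis
    by simp
qed

lemma occ_window_eq_sum:
  assumes "length u \<le> k"
  shows "real (occ (window x j k) u) = (\<Sum>t<k + 1 - length u. of_bool (window x (j + t) (length u) = u))"
  using assms by (simp add: occ_eq_sum_of_bool take_drop_window)

text \<open>Double counting: an occurrence of \<open>u\<close> at position \<open>m\<close> lies in the windows of length \<open>k\<close>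
  starting at \<open>m - t\<close> for all \<open>t \<le> k - length u\<close>, so it is counted \<open>k + 1 - length u\<close> times,
  up to a boundary loss of at most \<open>k\<close> occurrences.\<close>

lemma sum_occ_windows_ge:
  fixes x :: "nat \<Rightarrow> 'a" and u :: "'a list"
  assumes "length u \<le> k"
  shows "real (k + 1 - length u) * (real (card {j. j < n \<and> window x j (length u) = u}) - real k)
    \<le> (\<Sum>j<n. real (occ (window x j k) u))"
proof -
  define M where "M = k + 1 - length u"
  define f where "f j = (of_bool (window x j (length u) = u) :: real)" for j
  have f01: "0 \<le> f j" "f j \<le> 1" for j
    by (auto simp: f_def)
  have "real (card {j. j < n \<and> window x j (length u) = u}) = (\<Sum>j<n. f j)"
    by (simp add: f_def Int_def)
  then have "real M * (real (card {j. j < n \<and> window x j (length u) = u}) - real k)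
      = (\<Sum>t<M. (\<Sum>j<n. f j) - real k)"
    by simp
  also have "\<dots> \<le> (\<Sum>t<M. \<Sum>j<n. f (j + t))"
  proof (intro sum_mono)
    fix t assume "t \<in> {..<M}"
    then have "real t \<le> real k"
      by (simp add: M_def)
    then show "(\<Sum>j<n. f j) - real k \<le> (\<Sum>j<n. f (j + t))"
      using sum_lessThan_shift_ge[of f n t, OF f01] by linarith
  qed
  also have "\<dots> = (\<Sum>j<n. real (occ (window x j k) u))"
    using assms by (subst sum.swap) (simp add: occ_window_eq_sum f_def M_def add.commute)
  finally show ?thesis
    by (simp add: M_def)
qed

lemma occ_pref_le_card_windows_in:
  fixes x :: "nat \<Rightarrow> 'a" and u :: "'a list" and S :: "'a list set"
  assumes "u \<noteq> []" "length u \<le> k" "\<theta> \<ge> 0"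
    and light: "\<And>w. length w = k \<Longrightarrow> w \<notin> S \<Longrightarrow> real (occ w u) \<le> \<theta> * real (k + 1 - length u)"
  shows "real (occ (pref x n) u) \<le> real k + real (card {j. j < n \<and> window x j k \<in> S}) + \<theta> * real n"
proof -
  define M where "M = k + 1 - length u"
  let ?A = "card {j. j < n \<and> window x j (length u) = u}"
  let ?J = "card {j. j < n \<and> window x j k \<in> S}"
  have M: "real M > 0"
    using assms(2) by (simp add: M_def)
  have "occ (pref x n) u \<le> ?A"
    using assms(1) by (cases u) (auto simp: occ_pref_eq_card_windows intro!: card_mono)
  have "real M * (real ?A - real k) \<le> (\<Sum>j<n. real (occ (window x j k) u))"
    unfolding M_def by (rule sum_occ_windows_ge[OF assms(2)])
  also have "\<dots> \<le> (\<Sum>j<n. of_bool (window x j k \<in> S) * real M + \<theta> * real M)"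
  proof (intro sum_mono)
    fix j
    have "real (occ (window x j k) u) \<le> real M" "0 \<le> \<theta> * real M"
      using occ_le_length[of "window x j k" u] assms(3) by (simp_all add: M_def)
    then show "real (occ (window x j k) u) \<le> of_bool (window x j k \<in> S) * real M + \<theta> * real M"
      using light[of "window x j k", folded M_def] by (cases "window x j k \<in> S") simp_all
  qed
  also have "\<dots> = real M * (real ?J + \<theta> * real n)"
    by (simp add: sum.distrib Int_def algebra_simps flip: sum_distrib_right)
  finally have "real ?A - real k \<le> real ?J + \<theta> * real n"
    using M by (rule mult_left_le_imp_le)
  then show ?thesis
    using \<open>occ (pref x n) u \<le> ?A\<close> by linarith
qed

lemma card_windows_in_le_sum_occ:
  fixes x :: "nat \<Rightarrow> 'a::finite"
  assumes "S \<subseteq> {w. length w = k}" "n + k \<le> N + 1"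
  shows "card {j. j < n \<and> window x j k \<in> S} \<le> (\<Sum>w\<in>S. occ (pref x N) w)"
proof -
  have "finite S"
    by (rule finite_subset[OF assms(1)]) simp
  have "card {j. j < n \<and> window x j k \<in> S} \<le> card {j \<in> {..<N + 1 - k}. window x j k \<in> S}"
    using assms(2) by (intro card_mono) auto
  also have "\<dots> = (\<Sum>w\<in>S. card {j \<in> {j \<in> {..<N + 1 - k}. window x j k \<in> S}. window x j k = w})"
    using sum.group[of "{j \<in> {..<N + 1 - k}. window x j k \<in> S}" S "\<lambda>j. window x j k" "\<lambda>_. 1 :: nat"] \<open>finite S\<close>
    by (simp add: image_subset_iff)
  also have "\<dots> = (\<Sum>w\<in>S. occ (pref x N) w)"
    using assms(1) by (intro sum.cong refl) (auto simp: occ_pref_eq_card_windows intro!: arg_cong[where f = card])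
  finally show ?thesis .
qed

text \<open>Each word of \<open>S\<close> occurring fewer than \<open>I\<close> times fills fewer than \<open>I\<close> windows; the windows
  filled by words occurring at least \<open>I\<close> times are all windows except those counted by
  \<open>\<Sum>i<I. i * Zfreq lam i k x\<close>.\<close>

lemma card_windows_in_le_Zfreq:
  fixes x :: "nat \<Rightarrow> 'a::finite"
  assumes "S \<subseteq> {w. length w = k}" "k \<ge> 1" "lam \<ge> 0" "n \<le> nat \<lfloor>lam * real CARD('a) ^ k\<rfloor>"
  shows "real (card {j. j < n \<and> window x j k \<in> S})
    \<le> real I * real (card S) + real CARD('a) ^ k * (lam - (\<Sum>i<I. real i * Zfreq lam i k x))"
proof -
  define L where "L = nat \<lfloor>lam * real CARD('a) ^ k\<rfloor>"
  define N where "N = L + k - 1"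
  let ?W = "{w :: 'a list. length w = k}"
  have "real (card {j. j < n \<and> window x j k \<in> S}) \<le> (\<Sum>w\<in>S. real (occ (pref x N) w))"
    using card_windows_in_le_sum_occ[OF assms(1), of n N x] assms(2,4)
    by (simp add: N_def L_def flip: of_nat_sum)
  also have "\<dots> \<le> real I * real (card S) + (\<Sum>w\<in>?W. real (occ (pref x N) w))
      - (\<Sum>i<I. real i * real (card {w \<in> ?W. occ (pref x N) w = i}))"
    by (rule sum_subset_le_threshold[OF _ assms(1)]) simp
  also have "(\<Sum>w\<in>?W. real (occ (pref x N) w)) = real L"
    using sum_occ_pref_lists[of x N k] assms(2) by (simp add: N_def flip: of_nat_sum)
  also have "(\<Sum>i<I. real i * real (card {w \<in> ?W. occ (pref x N) w = i}))
      = real CARD('a) ^ k * (\<Sum>i<I. real i * Zfreq lam i k x)"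
    by (simp add: Zfreq_def N_def L_def sum_distrib_left)
  also have "real L \<le> lam * real CARD('a) ^ k"
    using assms(3) by (simp add: L_def)
  finally show ?thesis
    by (simp add: algebra_simps)
qed

lemma eventually_sum_gt_sum_liminf:
  fixes f :: "nat \<Rightarrow> nat \<Rightarrow> real"
  assumes liminf: "\<And>i. ereal (p i) = liminf (\<lambda>k. ereal (f i k))" and "\<epsilon> > 0"
  shows "eventually (\<lambda>k. (\<Sum>i<I. real i * p i) - \<epsilon> < (\<Sum>i<I. real i * f i k)) sequentially"
proof -
  define T where "T = (\<Sum>i<I. real i) + 1"
  define \<delta> where "\<delta> = \<epsilon> / T"
  have "T > 0"
    by (simp add: T_def add_nonneg_pos sum_nonneg)
  then have "\<delta> > 0" "\<delta> * T = \<epsilon>"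
    using \<open>\<epsilon> > 0\<close> by (simp_all add: \<delta>_def)
  have "eventually (\<lambda>k. \<forall>i\<in>{..<I}. p i - \<delta> < f i k) sequentially"
  proof (intro eventually_ball_finite ballI)
    fix i
    have "ereal (p i - \<delta>) < liminf (\<lambda>k. ereal (f i k))"
      using \<open>\<delta> > 0\<close> by (simp flip: liminf)
    then show "eventually (\<lambda>k. p i - \<delta> < f i k) sequentially"
      by (auto dest: less_LiminfD)
  qed simp
  then show ?thesis
  proof eventually_elim
    case (elim k)
    have "(\<Sum>i<I. real i * p i) - \<epsilon> < (\<Sum>i<I. real i * p i) - \<delta> * (\<Sum>i<I. real i)"
      using \<open>\<delta> > 0\<close> \<open>\<delta> * T = \<epsilon>\<close> by (simp add: T_def algebra_simps)
    also have "\<dots> = (\<Sum>i<I. real i * (p i - \<delta>))"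
      by (simp add: algebra_simps sum_subtractf sum_distrib_left)
    also have "\<dots> \<le> (\<Sum>i<I. real i * f i k)"
      using elim by (intro sum_mono mult_left_mono) (auto simp: less_imp_le)
    finally show ?case .
  qed
qed

lemma eventually_weighted_partial_sum_gt:
  fixes f :: "nat \<Rightarrow> nat \<Rightarrow> real"
  assumes "\<And>i. ereal (p i) = liminf (\<lambda>k. ereal (f i k))"
    and "(\<lambda>i. real i * p i) sums s" and "\<epsilon> > 0"
  obtains I where "eventually (\<lambda>k. s - \<epsilon> < (\<Sum>i<I. real i * f i k)) sequentially"
proof -
  have "eventually (\<lambda>I. s - \<epsilon> / 2 < (\<Sum>i<I. real i * p i)) sequentially"
    using assms(2,3) unfolding sums_def by (intro order_tendstoD(1)) auto
  then obtain I where I: "s - \<epsilon> / 2 < (\<Sum>i<I. real i * p i)"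
    by (auto simp: eventually_sequentially)
  have "eventually (\<lambda>k. (\<Sum>i<I. real i * p i) - \<epsilon> / 2 < (\<Sum>i<I. real i * f i k)) sequentially"
    using assms(1,3) by (intro eventually_sum_gt_sum_liminf) auto
  then have "eventually (\<lambda>k. s - \<epsilon> < (\<Sum>i<I. real i * f i k)) sequentially"
    by eventually_elim (use I in linarith)
  then show thesis
    by (rule that)
qed

lemma eventually_real_le_mult_power:
  fixes b :: real
  assumes "b \<ge> 2" "\<epsilon> > 0"
  shows "eventually (\<lambda>k. real k \<le> \<epsilon> * b ^ k) sequentially"
proof -
  have "(\<lambda>k. real k / 2 ^ k) \<longlonglongrightarrow> 0"
    by real_asymp
  then have "eventually (\<lambda>k. real k / 2 ^ k < \<epsilon>) sequentially"
    using assms(2) by (rule order_tendstoD)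
  then show ?thesis
  proof eventually_elim
    case (elim k)
    then have "real k \<le> \<epsilon> * 2 ^ k"
      by (simp add: field_simps)
    also have "\<dots> \<le> \<epsilon> * b ^ k"
      using assms by (intro mult_left_mono power_mono) auto
    finally show ?case .
  qed
qed

lemma eventually_card_lists_occ_ge_small:
  fixes u :: "'a::finite list"
  assumes "\<eta> > 0" "\<epsilon> > 0" "C \<ge> 0"
  shows "eventually (\<lambda>k. C * real (card {w :: 'a list. length w = k \<and>
      ((1 / real CARD('a)) ^ length u + \<eta>) * real (k + 1 - length u) \<le> real (occ w u)})
    \<le> \<epsilon> * real CARD('a) ^ k) sequentially"
proof -
  let ?l = "real (length u)"
  define K where "K = length u + nat \<lceil>2 * ?l * C / (\<eta>\<^sup>2 * \<epsilon>)\<rceil>"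
  show ?thesis
    using eventually_ge_at_top[of K]
  proof eventually_elim
    case (elim k)
    let ?b = "real CARD('a) ^ k"
    let ?S = "{w :: 'a list. length w = k \<and>
      ((1 / real CARD('a)) ^ length u + \<eta>) * real (k + 1 - length u) \<le> real (occ w u)}"
    define M where "M = real (k + 1 - length u)"
    have "length u \<le> k"
      using elim by (simp add: K_def)
    have M: "M > 0" "2 * ?l * C / (\<eta>\<^sup>2 * \<epsilon>) \<le> M"
      using elim by (auto simp: K_def M_def) linarith
    have "real (card ?S) * (\<eta>\<^sup>2 * M) * M \<le> (2 * ?l * ?b) * M"
      using card_lists_occ_ge_le[OF \<open>length u \<le> k\<close> assms(1)]
      by (simp add: M_def power2_eq_square algebra_simps)
    then have "real (card ?S) * (\<eta>\<^sup>2 * M) \<le> 2 * ?l * ?b"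
      using M(1) by simp
    then have "C * real (card ?S) * (\<eta>\<^sup>2 * M) \<le> (2 * ?l * C / (\<eta>\<^sup>2 * \<epsilon>)) * (\<epsilon> * ?b) * \<eta>\<^sup>2"
      using assms by (auto simp: field_simps mult_left_mono)
    also have "\<dots> \<le> M * (\<epsilon> * ?b) * \<eta>\<^sup>2"
      using M(2) assms by (intro mult_right_mono) auto
    finally show ?case
      using M(1) assms(1) by (simp add: algebra_simps)
  qed
qed

lemma mult_power_div_less_of_nat_floor_less:
  fixes b lam :: real
  assumes "nat \<lfloor>lam * b ^ (k - 1)\<rfloor> < n" "k \<ge> 1" "b > 0"
  shows "lam * b ^ k / b < real n"
proof -
  have "lam * b ^ k / b = lam * b ^ (k - 1)"
    using assms(2,3) by (simp add: power_eq_if)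
  also have "\<dots> < real n"
    using assms(1) by linarith
  finally show ?thesis .
qed

lemma eventually_sequentially_from_geometric_blocks:
  fixes b lam :: real
  assumes "b > 1" "lam > 0"
    and "eventually (\<lambda>k. \<forall>n. nat \<lfloor>lam * b ^ (k - 1)\<rfloor> < n \<longrightarrow> n \<le> nat \<lfloor>lam * b ^ k\<rfloor> \<longrightarrow> P n) sequentially"
  shows "eventually P sequentially"
proof -
  define L where "L k = nat \<lfloor>lam * b ^ k\<rfloor>" for k
  obtain K where K: "\<And>k n. k \<ge> K \<Longrightarrow> L (k - 1) < n \<Longrightarrow> n \<le> L k \<Longrightarrow> P n"
    using assms(3) by (auto simp: eventually_sequentially L_def)
  have "mono L"
    using assms(1,2) by (auto intro!: monoI nat_mono floor_mono simp: L_def)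
  have "\<exists>k. n \<le> L k" for n
  proof -
    obtain k where "real n / lam < b ^ k"
      using real_arch_pow[OF assms(1)] by blast
    then show ?thesis
      using assms(2) by (auto simp: L_def field_simps intro!: exI[of _ k] le_nat_floor)
  qed
  show ?thesis
  proof (rule eventually_sequentiallyI[of "Suc (L K)"])
    fix n assume n: "Suc (L K) \<le> n"
    define k where "k = (LEAST k. n \<le> L k)"
    have nk: "n \<le> L k"
      unfolding k_def by (rule LeastI_ex) fact
    have "K < k"
      using n nk monoD[OF \<open>mono L\<close>, of k K] by (cases "k \<le> K") auto
    moreover have "L (k - 1) < n"
      using not_less_Least[of "k - 1" "\<lambda>k. n \<le> L k"] \<open>K < k\<close> by (simp add: k_def)
    ultimately show "P n"
      using K[of k n] nk by simp
  qed
qed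

section \<open>Frequencies of factors\<close>

lemma occ_pref_le_in_block:
  fixes x :: "nat \<Rightarrow> 'a::finite" and u :: "'a list"
  assumes "u \<noteq> []" "length u \<le> k" "\<theta> \<ge> 0" "lam > 0" "\<epsilon> \<ge> 0"
  defines "S \<equiv> {w :: 'a list. length w = k \<and> \<theta> * real (k + 1 - length u) \<le> real (occ w u)}"
  assumes "nat \<lfloor>lam * real CARD('a) ^ (k - 1)\<rfloor> < n" "n \<le> nat \<lfloor>lam * real CARD('a) ^ k\<rfloor>"
    and "real k \<le> \<epsilon> * real CARD('a) ^ k"
    and "real I * real (card S) \<le> \<epsilon> * real CARD('a) ^ k"
    and "lam - \<epsilon> \<le> (\<Sum>i<I. real i * Zfreq lam i k x)"
  shows "real (occ (pref x n) u) \<le> (\<theta> + 3 * \<epsilon> * real CARD('a) / lam) * real n"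
proof -
  let ?b = "real CARD('a)"
  have "k \<ge> 1"
    using assms(1,2) by (cases u) auto
  have "real (occ (pref x n) u) \<le> real k + real (card {j. j < n \<and> window x j k \<in> S}) + \<theta> * real n"
    using assms(1-3) by (intro occ_pref_le_card_windows_in) (auto simp: S_def)
  moreover have "real (card {j. j < n \<and> window x j k \<in> S})
      \<le> real I * real (card S) + ?b ^ k * (lam - (\<Sum>i<I. real i * Zfreq lam i k x))"
    using \<open>k \<ge> 1\<close> assms(4,8) by (intro card_windows_in_le_Zfreq) (auto simp: S_def)
  moreover have "?b ^ k * (lam - (\<Sum>i<I. real i * Zfreq lam i k x)) \<le> ?b ^ k * \<epsilon>"
    using assms(11) by (intro mult_left_mono) auto
  moreover have "3 * \<epsilon> * ?b ^ k \<le> 3 * \<epsilon> * ?b / lam * real n"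
  proof -
    have "3 * \<epsilon> * ?b ^ k = 3 * \<epsilon> * ?b / lam * (lam * ?b ^ k / ?b)"
      using assms(4) by simp
    also have "\<dots> \<le> 3 * \<epsilon> * ?b / lam * real n"
      using mult_power_div_less_of_nat_floor_less[OF assms(7) \<open>k \<ge> 1\<close>] assms(4,5)
      by (intro mult_left_mono) simp_all
    finally show ?thesis .
  qed
  ultimately show ?thesis
    using assms(9,10) by (simp add: algebra_simps)
qed

lemma eventually_occ_pref_le:
  fixes x :: "nat \<Rightarrow> 'a::finite" and u :: "'a list"
  assumes "CARD('a) \<ge> 2" "lam > 0"
    and liminf: "\<And>i. ereal (p i) = liminf (\<lambda>k. ereal (Zfreq lam i k x))"
    and sums: "(\<lambda>i. real i * p i) sums lam"
    and "u \<noteq> []" "\<eta> > 0"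
  shows "eventually (\<lambda>n. real (occ (pref x n) u) \<le> ((1 / real CARD('a)) ^ length u + \<eta>) * real n) sequentially"
proof -
  define b where "b = real CARD('a)"
  define \<theta> where "\<theta> = (1 / b) ^ length u + \<eta> / 2"
  define \<epsilon> where "\<epsilon> = \<eta> * lam / (6 * b)"
  have b: "b \<ge> 2"
    using assms(1) by (simp add: b_def)
  have "\<theta> \<ge> 0" "\<epsilon> > 0" "\<theta> + 3 * \<epsilon> * b / lam = (1 / b) ^ length u + \<eta>"
    using b assms(2,6) by (simp_all add: \<theta>_def \<epsilon>_def)
  obtain I where "eventually (\<lambda>k. lam - \<epsilon> < (\<Sum>i<I. real i * Zfreq lam i k x)) sequentially"
    using eventually_weighted_partial_sum_gt[OF liminf sums \<open>\<epsilon> > 0\<close>] .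
  then have "eventually (\<lambda>k. \<forall>n. nat \<lfloor>lam * b ^ (k - 1)\<rfloor> < n \<longrightarrow> n \<le> nat \<lfloor>lam * b ^ k\<rfloor> \<longrightarrow>
      real (occ (pref x n) u) \<le> ((1 / b) ^ length u + \<eta>) * real n) sequentially"
    using eventually_real_le_mult_power[OF b \<open>\<epsilon> > 0\<close>] eventually_ge_at_top[of "length u"]
      eventually_card_lists_occ_ge_small[OF half_gt_zero[OF assms(6)] \<open>\<epsilon> > 0\<close> of_nat_0_le_iff, of I u]
  proof eventually_elim
    case (elim k)
    have "real (occ (pref x n) u) \<le> (\<theta> + 3 * \<epsilon> * b / lam) * real n"
      if "nat \<lfloor>lam * b ^ (k - 1)\<rfloor> < n" "n \<le> nat \<lfloor>lam * b ^ k\<rfloor>" for n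
      using occ_pref_le_in_block[OF assms(5) elim(3) \<open>\<theta> \<ge> 0\<close> assms(2) less_imp_le[OF \<open>\<epsilon> > 0\<close>]] that elim
      by (simp add: b_def \<theta>_def less_imp_le)
    then show ?case
      unfolding \<open>\<theta> + 3 * \<epsilon> * b / lam = _\<close> by blast
  qed
  from eventually_sequentially_from_geometric_blocks[OF _ assms(2) this] b show ?thesis
    by (simp add: b_def)
qed

lemma eventually_occ_pref_ge:
  fixes x :: "nat \<Rightarrow> 'a::finite" and u :: "'a list"
  defines "c \<equiv> (1 / real CARD('a)) ^ length u"
  assumes upper: "\<And>v \<eta>. length v = length u \<Longrightarrow> \<eta> > 0 \<Longrightarrow>
      eventually (\<lambda>n. real (occ (pref x n) v) \<le> (c + \<eta>) * real n) sequentially"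
    and "\<eta> > 0"
  shows "eventually (\<lambda>n. (c - \<eta>) * real n \<le> real (occ (pref x n) u)) sequentially"
proof -
  let ?W = "{v :: 'a list. length v = length u}"
  define B where "B = real CARD('a) ^ length u"
  define \<eta>' where "\<eta>' = \<eta> / (2 * B)"
  have "B > 0" "c * B = 1"
    by (simp_all add: B_def c_def power_one_over)
  then have "\<eta>' > 0" "\<eta>' * B = \<eta> / 2"
    using assms(3) by (simp_all add: \<eta>'_def)
  have "eventually (\<lambda>n. \<forall>v\<in>?W. real (occ (pref x n) v) \<le> (c + \<eta>') * real n) sequentially"
    using upper \<open>\<eta>' > 0\<close> by (intro eventually_ball_finite) auto
  then show ?thesis
    using eventually_ge_at_top[of "nat \<lceil>2 * real (length u) / \<eta>\<rceil>"]
  proof eventually_elim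
    case (elim n)
    have "real n - real (length u) \<le> (\<Sum>v\<in>?W. real (occ (pref x n) v))"
      using sum_occ_pref_lists[of x n "length u"] by (simp flip: of_nat_sum)
    also have "\<dots> = real (occ (pref x n) u) + (\<Sum>v\<in>?W - {u}. real (occ (pref x n) v))"
      by (subst sum.remove[of _ u]) auto
    also have "(\<Sum>v\<in>?W - {u}. real (occ (pref x n) v)) \<le> (\<Sum>v\<in>?W - {u}. (c + \<eta>') * real n)"
      using elim(1) by (intro sum_mono) auto
    also have "\<dots> = (B - 1) * ((c + \<eta>') * real n)"
      by (simp add: card_lists_length_eq_UNIV B_def)
    also have "\<dots> = (c * B) * real n + (\<eta>' * B) * real n - c * real n - \<eta>' * real n"
      by (simp add: algebra_simps)
    also have "\<dots> = real n - c * real n + (\<eta> / 2 - \<eta>') * real n"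
      unfolding \<open>c * B = 1\<close> \<open>\<eta>' * B = \<eta> / 2\<close> by (simp add: algebra_simps)
    also have "\<dots> \<le> real n - c * real n + \<eta> / 2 * real n"
      using \<open>\<eta>' > 0\<close> by (simp add: algebra_simps)
    finally have "real n - real (length u) \<le> real (occ (pref x n) u) + real n - c * real n + \<eta> / 2 * real n"
      by simp
    moreover have "real (length u) \<le> \<eta> / 2 * real n"
      using elim(2) assms(3) by (simp add: field_simps)
    ultimately show ?case
      by (simp add: algebra_simps)
  qed
qed

lemma LIMSEQ_divide_of_nat_if_linear_bounds:
  fixes a :: "nat \<Rightarrow> real"
  assumes "\<And>\<eta>. \<eta> > 0 \<Longrightarrow> eventually (\<lambda>n. a n \<le> (c + \<eta>) * real n) sequentially"
    and "\<And>\<eta>. \<eta> > 0 \<Longrightarrow> eventually (\<lambda>n. (c - \<eta>) * real n \<le> a n) sequentially"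
  shows "(\<lambda>n. a n / real n) \<longlonglongrightarrow> c"
proof (rule order_tendstoI)
  fix d assume "c < d"
  then have "eventually (\<lambda>n. a n \<le> (c + (d - c) / 2) * real n) sequentially"
    by (intro assms(1)) simp
  then show "eventually (\<lambda>n. a n / real n < d) sequentially"
    using eventually_gt_at_top[of 0]
  proof eventually_elim
    case (elim n)
    have "(c + (d - c) / 2) * real n < d * real n"
      using elim(2) \<open>c < d\<close> by (intro mult_strict_right_mono) (auto simp: field_simps)
    then have "a n < d * real n"
      using elim(1) by linarith
    then show ?case
      using elim(2) by (simp add: divide_less_eq)
  qed
next
  fix d assume "d < c"
  then have "eventually (\<lambda>n. (c - (c - d) / 2) * real n \<le> a n) sequentially"
    by (intro assms(2)) simp
  then show "eventually (\<lambda>n. d < a n / real n) sequentially"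
    using eventually_gt_at_top[of 0]
  proof eventually_elim
    case (elim n)
    have "d * real n < (c - (c - d) / 2) * real n"
      using elim(2) \<open>d < c\<close> by (intro mult_strict_right_mono) (auto simp: field_simps)
    then have "d * real n < a n"
      using elim(1) by linarith
    then show ?case
      using elim(2) by (simp add: less_divide_eq)
  qed
qed

lemma borel_normalI:
  fixes x :: "nat \<Rightarrow> 'a::finite"
  assumes "\<And>u \<eta>. u \<noteq> [] \<Longrightarrow> \<eta> > 0 \<Longrightarrow>
      eventually (\<lambda>n. real (occ (pref x n) u) \<le> ((1 / real CARD('a)) ^ length u + \<eta>) * real n) sequentially"
  shows "borel_normal x"
  unfolding borel_normal_def
proof
  fix u :: "'a list"
  show "(\<lambda>n. real (occ (pref x n) u) / real n) \<longlonglongrightarrow> (1 / real CARD('a)) ^ length u"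
  proof (cases "u = []")
    case True
    have "(\<lambda>n. real (Suc n) / real n) \<longlonglongrightarrow> 1"
      by real_asymp
    then show ?thesis
      using True by (simp add: occ_pref_Nil)
  next
    case False
    then have "eventually (\<lambda>n. real (occ (pref x n) v) \<le> ((1 / real CARD('a)) ^ length u + \<eta>) * real n)
        sequentially" if "length v = length u" "\<eta> > 0" for v \<eta>
      using assms[of v \<eta>] that by (auto simp flip: length_greater_0_conv)
    then show ?thesis
      using False by (intro LIMSEQ_divide_of_nat_if_linear_bounds assms eventually_occ_pref_ge) auto
  qed
qed

theorem theorem2:
  fixes x :: "nat \<Rightarrow> 'a::finite" and lam :: real and p :: "nat \<Rightarrow> real"
  assumes "CARD('a) \<ge> 2"
    and "lam > 0"
    and "\<And>i. ereal (p i) = liminf (\<lambda>k. ereal (Zfreq lam i k x))"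
    and "(\<lambda>i. real i * p i) sums lam"
  shows "borel_normal x"
  using eventually_occ_pref_le[OF assms] by (rule borel_normalI)

end
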